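(* Let $p$ be a permutation of length $t\ge 1$. For $k\ge 0$ and $m\ge 0$ let $A_{k,m}$ be the number of permutations in $\mathcal{S}_k$ that contain exactly $m$ occurrences of $p$ as a classical pattern (with $A_{0,0}=1$ and $A_{0,m}=0$ for $m\ge 1$). For $N\ge 1$, an occurrence of the place-difference-value pattern $P=(p,(\mathbb{O},\mathbb{E},\ldots,\mathbb{E}),\emptyset,(\mathbb{E},\ldots,\mathbb{E}))$ in $\pi=\pi_1\cdots\pi_N\in\mathcal{S}_N$ is a sequence of indices $i_1<\cdots<i_t$ such that every $i_j$ is odd, every value $\pi_{i_j}$ is even, and $\pi_{i_1}\cdots\pi_{i_t}$ is order isomorphic to $p$. Let $B_{N,m}$ be the number of permutations in $\mathcal{S}_N$ with exactly $m$ occurrences of $P$. Then for all $n\ge 1$ and $m\ge 0$, $$B_{2n,m}=\sum_{k=0}^{n} n!\,(n-k)!\binom{n}{k}^{3}A_{k,m}.$$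
   Context: $\mathcal{S}_n$ denotes the set of permutations of $\{1,\dots,n\}$, written as words $\pi_1\cdots\pi_n$. $\mathbb{E}$ and $\mathbb{O}$ denote the even and odd numbers. A permutation $\sigma$ occurs (as a classical pattern) in $\pi$ at indices $i_1<\dots<i_t$ if $\pi_{i_1}\cdots\pi_{i_t}$ is order isomorphic to $\sigma$; the number of occurrences is the number of such index sequences. In the place-difference-value language, $P$ has place sets $X_0=\mathbb{O}$ (so $i_1$ is odd) and $X_j=\mathbb{E}$ for $j\ge1$ (consecutive chosen positions, and $i_t$ and $N+1$, differ by an even number), no difference conditions, and value sets all equal to $\mathbb{E}$. *)

theory Defs
  imports Main
begin

text \<open>Permutations of {1..n}, written as words (lists); position i (1-based) holds xs ! (i-1).\<close>
definition perms :: "nat \<Rightarrow> nat list set" where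
  "perms n = {xs. distinct xs \<and> set xs = {1..n}}"

definition order_iso :: "nat list \<Rightarrow> nat list \<Rightarrow> bool" where
  "order_iso u v \<longleftrightarrow> length u = length v \<and>
     (\<forall>a<length u. \<forall>b<length u. (u ! a < u ! b) = (v ! a < v ! b))"

definition occ :: "nat list \<Rightarrow> nat list \<Rightarrow> nat list set" where
  "occ p \<pi> = {is. length is = length p \<and> sorted_wrt (<) is \<and> set is \<subseteq> {1..length \<pi>} \<and>
                  order_iso (map (\<lambda>i. \<pi> ! (i - 1)) is) p}"

definition pdv_occ :: "nat list \<Rightarrow> nat list \<Rightarrow> nat list set" where
  "pdv_occ p \<pi> = {is \<in> occ p \<pi>. \<forall>i\<in>set is. odd i \<and> even (\<pi> ! (i - 1))}"

definition A_count :: "nat list \<Rightarrow> nat \<Rightarrow> nat \<Rightarrow> nat" where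
  "A_count p k m = card {\<pi> \<in> perms k. card (occ p \<pi>) = m}"

definition B_count :: "nat list \<Rightarrow> nat \<Rightarrow> nat \<Rightarrow> nat" where
  "B_count p N m = card {\<pi> \<in> perms N. card (pdv_occ p \<pi>) = m}"

end

theory Submission
  imports Defs "HOL-Combinatorics.Multiset_Permutations"
begin

text \<open>Split \<open>\<pi> \<in> S\<^sub>2\<^sub>n\<close> into the word \<open>a\<close> of its letters at odd places and the word \<open>b\<close> of its
  letters at even places. Occurrences of the place-difference-value pattern see only the even
  letters of \<open>a\<close>, so their number is the number of classical occurrences of \<open>p\<close> in the
  standardization \<open>\<sigma> \<in> S\<^sub>k\<close> of the even subword of \<open>a\<close>, while \<open>b\<close> is any arrangement of the
  remaining \<open>n\<close> letters (\<open>n!\<close> ways). Given \<open>\<sigma>\<close>, the word \<open>a\<close> is fixed by choosing the \<open>k\<close> even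
  values, the \<open>k\<close> places they occupy, and an injective word of \<open>n - k\<close> odd values, in
  \<open>C(n,k) \<cdot> C(n,k) \<cdot> C(n,k)(n - k)!\<close> ways.\<close>

section \<open>Permutations and standardization\<close>

lemma length_perms: "\<pi> \<in> perms N \<Longrightarrow> length \<pi> = N"
  unfolding perms_def using distinct_card[of \<pi>] by auto

lemma perms_eq_permutations_of_set: "perms k = permutations_of_set {1..k}"
  unfolding perms_def permutations_of_set_def by auto

lemma card_perms: "card (perms k) = fact k"
  by (simp add: perms_eq_permutations_of_set)

lemma finite_perms: "finite (perms k)"
  by (simp add: perms_eq_permutations_of_set)

definition rank :: "nat set \<Rightarrow> nat \<Rightarrow> nat" where
  "rank S x = card {y \<in> S. y \<le> x}"

definition std :: "nat list \<Rightarrow> nat list" where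
  "std w = map (rank (set w)) w"

lemma rank_strict_mono:
  assumes "finite S" "y \<in> S" "x < y"
  shows "rank S x < rank S y"
  unfolding rank_def
proof (rule psubset_card_mono)
  have "y \<notin> {z \<in> S. z \<le> x}" "y \<in> {z \<in> S. z \<le> y}" using assms by auto
  moreover have "{z \<in> S. z \<le> x} \<subseteq> {z \<in> S. z \<le> y}" using assms by auto
  ultimately show "{z \<in> S. z \<le> x} \<subset> {z \<in> S. z \<le> y}" by blast
qed (use assms in auto)

lemma rank_less_iff:
  assumes "finite S" "x \<in> S" "y \<in> S"
  shows "rank S x < rank S y \<longleftrightarrow> x < y"
  using rank_strict_mono[OF assms(1)] assms by (metis linorder_neq_iff order_less_asym)

lemma inj_on_rank: "finite S \<Longrightarrow> inj_on (rank S) S"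
  by (rule inj_onI) (metis rank_strict_mono linorder_neq_iff less_irrefl)

lemma rank_in_range:
  assumes "finite S" "x \<in> S"
  shows "rank S x \<in> {1..card S}"
proof -
  have "{y \<in> S. y \<le> x} \<noteq> {}" using assms by auto
  then have "rank S x \<ge> 1" unfolding rank_def using assms by (simp add: Suc_leI card_gt_0_iff)
  moreover have "rank S x \<le> card S" unfolding rank_def using assms by (intro card_mono) auto
  ultimately show ?thesis by auto
qed

lemma length_std [simp]: "length (std w) = length w"
  by (simp add: std_def)

lemma std_in_perms:
  assumes "distinct w"
  shows "std w \<in> perms (length w)"
proof -
  have dist: "distinct (std w)"
    unfolding std_def using assms inj_on_rank[of "set w"] by (simp add: distinct_map)
  moreover have "set (std w) \<subseteq> {1..length w}"
    unfolding std_def using rank_in_range[of "set w"] assms by (auto simp: distinct_card)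
  moreover have "card (set (std w)) = card {1..length w}"
    using distinct_card[OF dist] by (simp add: std_def)
  ultimately show ?thesis unfolding perms_def by (simp add: card_subset_eq)
qed

lemma order_iso_std: "distinct w \<Longrightarrow> order_iso w (std w)"
  unfolding order_iso_def std_def using rank_less_iff[of "set w"] by auto

lemma std_eq_imp_eq:
  assumes "set v = set w" "std v = std w"
  shows "v = w"
proof (rule nth_equalityI)
  show len: "length v = length w" using assms(2) unfolding std_def by (metis length_map)
  fix i assume "i < length v"
  moreover have "rank (set w) (v ! i) = rank (set w) (w ! i)"
    using assms \<open>i < length v\<close> len unfolding std_def by (metis nth_map)
  ultimately show "v ! i = w ! i"
    using inj_on_rank[of "set w"] len assms(1) by (metis finite_set inj_on_eq_iff nth_mem)
qed

lemma occ_cong_order_iso: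
  assumes "order_iso u v"
  shows "occ p u = occ p v"
proof -
  have "order_iso (map (\<lambda>i. u ! (i - 1)) is) p \<longleftrightarrow> order_iso (map (\<lambda>i. v ! (i - 1)) is) p"
    if "set is \<subseteq> {1..length u}" for "is"
  proof -
    have "is ! a - 1 < length u" if "a < length is" for a
      using \<open>set is \<subseteq> _\<close> that nth_mem by fastforce
    then show ?thesis using assms unfolding order_iso_def by auto
  qed
  moreover have "length u = length v" using assms unfolding order_iso_def by auto
  ultimately show ?thesis unfolding occ_def by auto
qed

lemma prod_top_interval_eq_binomial:
  assumes "k \<le> n"
  shows "\<Prod>{n - k + 1..n} = (n choose k) * fact k"
proof -
  have "fact (n - k) * \<Prod>{n - k + 1..n} = fact k * fact (n - k) * (n choose k)"
    using fact_eq_fact_times[of "n - k" n] binomial_fact_lemma[OF assms] by simp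
  then show ?thesis by simp
qed

text \<open>An injective word is determined by its set of letters and its standardization; counting shows
  that every pair of a \<open>k\<close>-set and a permutation in \<open>S\<^sub>k\<close> arises.\<close>
lemma card_words_with_std:
  assumes "finite E" "\<sigma> \<in> perms k" "k \<le> card E"
  shows "card {w. length w = k \<and> distinct w \<and> set w \<subseteq> E \<and> std w = \<sigma>} = card E choose k"
proof -
  define W where "W = {w. length w = k \<and> distinct w \<and> set w \<subseteq> E}"
  define T where "T = {Y. Y \<subseteq> E \<and> card Y = k} \<times> perms k"
  define \<Phi> where "\<Phi> w = (set w, std w)" for w
  have inj: "inj_on \<Phi> W"
    by (rule inj_onI) (auto simp: \<Phi>_def W_def intro: std_eq_imp_eq)
  have sub: "\<Phi> ` W \<subseteq> T"
    using std_in_perms by (auto simp: \<Phi>_def W_def T_def distinct_card)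
  have "card (\<Phi> ` W) = card W"
    using inj by (rule card_image)
  also have "\<dots> = \<Prod>{card E - k + 1..card E}"
    unfolding W_def using card_lists_distinct_length_eq assms by simp
  also have "\<dots> = card T"
    unfolding T_def using prod_top_interval_eq_binomial[OF assms(3)] assms(1)
    by (simp add: card_cartesian_product card_perms n_subsets)
  finally have img: "\<Phi> ` W = T"
    using sub assms(1) by (intro card_subset_eq) (auto simp: T_def finite_perms)
  have "\<Phi> ` {w \<in> W. std w = \<sigma>} = {z \<in> \<Phi> ` W. snd z = \<sigma>}"
    by (auto simp: \<Phi>_def)
  also have "\<dots> = {Y. Y \<subseteq> E \<and> card Y = k} \<times> {\<sigma>}"
    unfolding img T_def using assms(2) by auto
  finally have "card {w \<in> W. std w = \<sigma>} = card ({Y. Y \<subseteq> E \<and> card Y = k} \<times> {\<sigma>})"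
    using card_image[OF inj_on_subset[OF inj]] by (metis (no_types, lifting) mem_Collect_eq subsetI)
  then have "card {w \<in> W. std w = \<sigma>} = card E choose k"
    using assms(1) by (simp add: n_subsets card_cartesian_product)
  then show ?thesis unfolding W_def by (simp add: conj_assoc)
qed

section \<open>Occurrences inside a subsequence\<close>

lemma sorted_wrt_less_map_iff:
  fixes f :: "'a::linorder \<Rightarrow> 'b::linorder"
  assumes "strict_mono_on A f" "set xs \<subseteq> A"
  shows "sorted_wrt (<) (map f xs) \<longleftrightarrow> sorted_wrt (<) xs"
proof -
  have less_iff: "f x < f y \<longleftrightarrow> x < y" if "x \<in> set xs" "y \<in> set xs" for x y
    using strict_mono_on_less[OF assms(1)] assms(2) that by blast
  show ?thesis
    unfolding sorted_wrt_map
    by (rule iffI; erule sorted_wrt_mono_rel[rotated]) (simp_all add: less_iff)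
qed

lemma card_occ_within:
  assumes sorted: "sorted_wrt (<) ps" and places: "set ps \<subseteq> {1..length \<pi>}"
  shows "card {is \<in> occ p \<pi>. set is \<subseteq> set ps} = card (occ p (map (\<lambda>i. \<pi> ! (i - 1)) ps))"
proof -
  define L where "L = length ps"
  define w where "w = map (\<lambda>i. \<pi> ! (i - 1)) ps"
  define f where "f j = ps ! (j - 1)" for j
  have mono: "strict_mono_on {1..L} f"
    unfolding f_def L_def by (intro strict_mono_onI sorted_wrt_nth_less[OF sorted]) auto
  have img: "f ` {1..L} = set ps"
    unfolding image_Suc_lessThan[symmetric] image_image f_def L_def by (auto simp: set_conv_nth)
  have occ_w_lists: "occ p w \<subseteq> lists {1..L}"
    unfolding occ_def w_def L_def by auto
  have key: "J \<in> occ p w \<longleftrightarrow> map f J \<in> occ p \<pi>" if J: "set J \<subseteq> {1..L}" for J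
  proof -
    have subword: "map (\<lambda>j. w ! (j - 1)) J = map (\<lambda>i. \<pi> ! (i - 1)) (map f J)"
      using J unfolding w_def f_def L_def by (auto simp: subset_iff)
    have "set (map f J) \<subseteq> {1..length \<pi>}"
      using J img places by auto
    moreover have "length w = L" by (simp add: w_def L_def)
    ultimately show ?thesis
      using J sorted_wrt_less_map_iff[OF mono J] unfolding occ_def mem_Collect_eq subword by auto
  qed
  have "{is \<in> occ p \<pi>. set is \<subseteq> set ps} = map f ` occ p w"
  proof
    show "{is \<in> occ p \<pi>. set is \<subseteq> set ps} \<subseteq> map f ` occ p w"
    proof
      fix "is" assume "is": "is \<in> {is \<in> occ p \<pi>. set is \<subseteq> set ps}"
      then have "is \<in> map f ` lists {1..L}"
        by (auto simp: img[symmetric] lists_image[symmetric])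
      then obtain J where "J \<in> lists {1..L}" "is = map f J" by blast
      then show "is \<in> map f ` occ p w" using key "is" by auto
    qed
    show "map f ` occ p w \<subseteq> {is \<in> occ p \<pi>. set is \<subseteq> set ps}"
    proof (intro image_subsetI CollectI conjI)
      fix J assume "J \<in> occ p w"
      then have "set J \<subseteq> {1..L}" using occ_w_lists by auto
      with \<open>J \<in> occ p w\<close> show "map f J \<in> occ p \<pi>" "set (map f J) \<subseteq> set ps"
        using key img by auto
    qed
  qed
  moreover have "inj_on (map f) (occ p w)"
    using inj_on_map_lists[OF strict_mono_on_imp_inj_on[OF mono]] occ_w_lists by (rule inj_on_subset)
  ultimately show ?thesis unfolding w_def by (simp add: card_image)
qed

section \<open>Interleavings\<close>

fun falling_fact :: "nat \<Rightarrow> nat \<Rightarrow> nat" where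
  "falling_fact c 0 = 1"
| "falling_fact c (Suc j) = c * falling_fact (c - 1) j"

lemma falling_fact_mult_fact: "j \<le> c \<Longrightarrow> falling_fact c j * fact (c - j) = fact c"
proof (induction j arbitrary: c)
  case (Suc j)
  then obtain c' where "c = Suc c'" by (cases c) auto
  with Suc show ?case by (simp add: algebra_simps)
qed simp

lemma falling_fact_eq_binomial:
  assumes "k \<le> n"
  shows "falling_fact n (n - k) = (n choose k) * fact (n - k)"
proof -
  have "fact k * falling_fact n (n - k) = fact k * ((n choose k) * fact (n - k))"
    using falling_fact_mult_fact[of "n - k" n] binomial_fact_lemma[OF assms] assms
    by (simp add: algebra_simps)
  then show ?thesis by simp
qed

definition interleavings :: "('a \<Rightarrow> bool) \<Rightarrow> nat \<Rightarrow> 'a list \<Rightarrow> 'a set \<Rightarrow> 'a list set" where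
  "interleavings P L w D =
     {a. length a = L \<and> distinct a \<and> set a \<subseteq> set w \<union> D \<and> filter P a = w}"

lemma finite_interleavings: "finite D \<Longrightarrow> finite (interleavings P L w D)"
  by (rule finite_subset[OF _ finite_lists_length_eq[of "set w \<union> D" L]])
    (auto simp: interleavings_def)

lemma interleavings_0: "interleavings P 0 w D = (if w = [] then {[]} else {})"
  by (auto simp: interleavings_def)

lemma Cons_in_interleavings_iff:
  assumes "\<forall>x\<in>D. \<not> P x" "distinct w" "\<forall>y\<in>set w. P y"
  shows "x # a \<in> interleavings P (Suc L) w D \<longleftrightarrow>
    (P x \<and> w = x # tl w \<and> a \<in> interleavings P L (tl w) D) \<or>
    (x \<in> D \<and> a \<in> interleavings P L w (D - {x}))"
  using assms unfolding interleavings_def by (cases w) auto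

lemma interleavings_Suc:
  assumes "\<forall>x\<in>D. \<not> P x" "distinct w" "\<forall>y\<in>set w. P y"
  shows "interleavings P (Suc L) w D =
    (case w of [] \<Rightarrow> {} | y # w' \<Rightarrow> Cons y ` interleavings P L w' D) \<union>
    (\<Union>x\<in>D. Cons x ` interleavings P L w (D - {x}))" (is "?lhs = ?first \<union> ?rest")
proof (intro set_eqI iffI)
  fix a assume "a \<in> ?lhs"
  then obtain x a' where "a = x # a'" "x # a' \<in> ?lhs"
    by (cases a) (auto simp: interleavings_def)
  then show "a \<in> ?first \<union> ?rest"
    using Cons_in_interleavings_iff[OF assms] by (cases w) auto
next
  fix a assume "a \<in> ?first \<union> ?rest"
  then obtain x a' where "a = x # a'" "x # a' \<in> ?lhs"
    using Cons_in_interleavings_iff[OF assms] assms(3) by (cases w) auto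
  then show "a \<in> ?lhs" by simp
qed

lemma card_interleavings:
  assumes "finite D" "\<forall>x\<in>D. \<not> P x" "distinct w" "\<forall>y\<in>set w. P y"
  shows "card (interleavings P L w D) = (L choose length w) * falling_fact (card D) (L - length w)"
  using assms
proof (induction L arbitrary: w D)
  case 0
  then show ?case by (cases w) (simp_all add: interleavings_0)
next
  case (Suc L)
  define rest where "rest = (\<Union>x\<in>D. Cons x ` interleavings P L w (D - {x}))"
  have card_rest: "card rest = card D * ((L choose length w) * falling_fact (card D - 1) (L - length w))"
  proof -
    have "card rest = (\<Sum>x\<in>D. card (interleavings P L w (D - {x})))"
      unfolding rest_def using Suc.prems
      by (subst card_UN_disjoint) (auto simp: finite_interleavings card_image)
    also have "\<dots> = (\<Sum>x\<in>D. (L choose length w) * falling_fact (card D - 1) (L - length w))"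
      using Suc.prems by (intro sum.cong refl) (simp add: Suc.IH)
    finally show ?thesis by simp
  qed
  have split: "interleavings P (Suc L) w D =
      (case w of [] \<Rightarrow> {} | y # w' \<Rightarrow> Cons y ` interleavings P L w' D) \<union> rest"
    unfolding rest_def using Suc.prems by (intro interleavings_Suc) auto
  show ?case
  proof (cases w)
    case Nil
    then show ?thesis using split card_rest by simp
  next
    case (Cons y w')
    have "Cons y ` interleavings P L w' D \<inter> rest = {}"
      unfolding rest_def using Suc.prems Cons by auto
    then have "card (interleavings P (Suc L) w D) =
        card (interleavings P L w' D) + card rest"
      using split Cons Suc.prems
      by (simp add: card_Un_disjoint finite_interleavings rest_def card_image)
    also have "\<dots> = (L choose length w') * falling_fact (card D) (L - length w') + card rest"
      using Suc.prems Cons by (simp add: Suc.IH)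
    also have "\<dots> = (Suc L choose length w) * falling_fact (card D) (Suc L - length w)"
    proof (cases "length w' < L")
      case True
      then have "falling_fact (card D) (L - length w') =
          card D * falling_fact (card D - 1) (L - Suc (length w'))"
        by (metis Suc_diff_Suc falling_fact.simps(2))
      then show ?thesis using card_rest Cons True by (simp add: algebra_simps)
    qed (use card_rest Cons in simp)
    finally show ?thesis .
  qed
qed

section \<open>Odd and even places\<close>

text \<open>List index \<open>2 * j\<close> is the odd position \<open>2 * j + 1\<close> of the 1-based convention of \<open>occ\<close>.\<close>
definition odd_places :: "nat \<Rightarrow> nat list \<Rightarrow> nat list" where
  "odd_places n \<pi> = map (\<lambda>j. \<pi> ! (2 * j)) [0..<n]"

definition even_places :: "nat \<Rightarrow> nat list \<Rightarrow> nat list" where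
  "even_places n \<pi> = map (\<lambda>j. \<pi> ! (2 * j + 1)) [0..<n]"

fun alternate :: "'a list \<Rightarrow> 'a list \<Rightarrow> 'a list" where
  "alternate (x # xs) (y # ys) = x # y # alternate xs ys"
| "alternate _ _ = []"

definition odd_place_words :: "nat \<Rightarrow> nat list set" where
  "odd_place_words n = {a. length a = n \<and> distinct a \<and> set a \<subseteq> {1..2 * n}}"

lemma length_alternate: "length a = length b \<Longrightarrow> length (alternate a b) = 2 * length a"
  by (induction a b rule: alternate.induct) auto

lemma mset_alternate: "length a = length b \<Longrightarrow> mset (alternate a b) = mset (a @ b)"
  by (induction a b rule: alternate.induct) auto

lemma nth_alternate:
  "length a = length b \<Longrightarrow> i < 2 * length a \<Longrightarrow>
    alternate a b ! i = (if even i then a ! (i div 2) else b ! (i div 2))"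
proof (induction a b arbitrary: i rule: alternate.induct)
  case (1 x xs y ys)
  show ?case
  proof (cases i)
    case (Suc i')
    show ?thesis
    proof (cases i')
      case (Suc i'')
      then have "i div 2 = Suc (i'' div 2)" using \<open>i = Suc i'\<close> by simp
      with 1 Suc \<open>i = Suc i'\<close> show ?thesis by simp
    qed (use Suc in simp)
  qed simp
qed simp_all


lemma alternate_odd_even_places:
  assumes "length \<pi> = 2 * n"
  shows "alternate (odd_places n \<pi>) (even_places n \<pi>) = \<pi>"
proof (rule nth_equalityI)
  fix i assume "i < length (alternate (odd_places n \<pi>) (even_places n \<pi>))"
  then have "i < 2 * n" by (simp add: length_alternate odd_places_def even_places_def)
  moreover have "2 * (i div 2) = i" if "even i" using that by simp
  moreover have "2 * (i div 2) + 1 = i" if "odd i" using that by presburger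
  ultimately show "alternate (odd_places n \<pi>) (even_places n \<pi>) ! i = \<pi> ! i"
    by (auto simp: nth_alternate odd_places_def even_places_def)
qed (simp add: assms length_alternate odd_places_def even_places_def)

lemma odd_places_alternate:
  assumes "length a = n" "length b = n"
  shows "odd_places n (alternate a b) = a"
  by (rule nth_equalityI) (simp_all add: assms odd_places_def nth_alternate)

lemma even_places_alternate:
  assumes "length a = n" "length b = n"
  shows "even_places n (alternate a b) = b"
  by (rule nth_equalityI) (simp_all add: assms even_places_def nth_alternate)

lemma alternate_in_perms_iff:
  assumes "length a = n" "length b = n"
  shows "alternate a b \<in> perms (2 * n) \<longleftrightarrow> distinct (a @ b) \<and> set (a @ b) = {1..2 * n}"
proof -
  have "mset (alternate a b) = mset (a @ b)" using assms by (simp add: mset_alternate)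
  then have "set (alternate a b) = set (a @ b)" "distinct (alternate a b) = distinct (a @ b)"
    by (rule mset_eq_setD, rule mset_eq_imp_distinct_iff)
  then show ?thesis by (simp add: perms_def)
qed

lemma card_perms_by_odd_places:
  "card {\<pi> \<in> perms (2 * n). Q (odd_places n \<pi>)} = fact n * card {a \<in> odd_place_words n. Q a}"
proof -
  define A where "A = {a \<in> odd_place_words n. Q a}"
  define S where "S = Sigma A (\<lambda>a. permutations_of_set ({1..2 * n} - set a))"
  have complement: "card ({1..2 * n} - set a) = n" if "a \<in> odd_place_words n" for a
    using that by (auto simp: odd_place_words_def card_Diff_subset distinct_card)
  have "bij_betw (\<lambda>\<pi>. (odd_places n \<pi>, even_places n \<pi>)) {\<pi> \<in> perms (2 * n). Q (odd_places n \<pi>)} S"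
  proof (rule bij_betw_byWitness[where f' = "\<lambda>(a, b). alternate a b"])
    show "\<forall>\<pi>\<in>{\<pi> \<in> perms (2 * n). Q (odd_places n \<pi>)}.
        (\<lambda>(a, b). alternate a b) (odd_places n \<pi>, even_places n \<pi>) = \<pi>"
      by (auto simp: alternate_odd_even_places length_perms)
    have lengths: "length a = n" "length b = n" if "(a, b) \<in> S" for a b
    proof -
      from that have a: "a \<in> odd_place_words n"
        and b: "b \<in> permutations_of_set ({1..2 * n} - set a)"
        by (auto simp: S_def A_def)
      show "length a = n" using a by (simp add: odd_place_words_def)
      show "length b = n" using length_finite_permutations_of_set[OF b] complement[OF a] by simp
    qed
    then show "\<forall>ab\<in>S. (odd_places n ((\<lambda>(a, b). alternate a b) ab),
        even_places n ((\<lambda>(a, b). alternate a b) ab)) = ab"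
      by (auto simp: odd_places_alternate even_places_alternate)
    show "(\<lambda>\<pi>. (odd_places n \<pi>, even_places n \<pi>)) ` {\<pi> \<in> perms (2 * n). Q (odd_places n \<pi>)} \<subseteq> S"
    proof clarify
      fix \<pi> assume "\<pi> \<in> perms (2 * n)" "Q (odd_places n \<pi>)"
      then have "alternate (odd_places n \<pi>) (even_places n \<pi>) \<in> perms (2 * n)"
        by (simp add: alternate_odd_even_places length_perms)
      moreover have "length (odd_places n \<pi>) = n" "length (even_places n \<pi>) = n"
        by (simp_all add: odd_places_def even_places_def)
      ultimately have "distinct (odd_places n \<pi> @ even_places n \<pi>)"
        "set (odd_places n \<pi> @ even_places n \<pi>) = {1..2 * n}"
        using alternate_in_perms_iff by blast+
      with \<open>Q (odd_places n \<pi>)\<close> \<open>length (odd_places n \<pi>) = n\<close>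
      show "(odd_places n \<pi>, even_places n \<pi>) \<in> S"
        by (auto simp: S_def A_def odd_place_words_def permutations_of_set_def)
    qed
    show "(\<lambda>(a, b). alternate a b) ` S \<subseteq> {\<pi> \<in> perms (2 * n). Q (odd_places n \<pi>)}"
    proof (rule image_subsetI)
      fix ab assume "ab \<in> S"
      then obtain a b where ab: "ab = (a, b)" "(a, b) \<in> S" by (cases ab) auto
      then have a: "a \<in> odd_place_words n" "Q a"
        and b: "b \<in> permutations_of_set ({1..2 * n} - set a)"
        by (auto simp: S_def A_def)
      then have "distinct (a @ b)" "set (a @ b) = {1..2 * n}"
        by (auto simp: odd_place_words_def permutations_of_set_def)
      then have "alternate a b \<in> perms (2 * n)"
        using alternate_in_perms_iff lengths[OF ab(2)] by blast
      moreover have "odd_places n (alternate a b) = a"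
        using lengths[OF ab(2)] by (rule odd_places_alternate)
      ultimately show "(\<lambda>(a, b). alternate a b) ab \<in> {\<pi> \<in> perms (2 * n). Q (odd_places n \<pi>)}"
        using a ab(1) by simp
    qed
  qed
  then have "card {\<pi> \<in> perms (2 * n). Q (odd_places n \<pi>)} = card S"
    by (rule bij_betw_same_card)
  also have "\<dots> = (\<Sum>a\<in>A. card (permutations_of_set ({1..2 * n} - set a)))"
  proof (unfold S_def, rule card_SigmaI)
    show "finite A" unfolding A_def odd_place_words_def
      by (rule finite_subset[OF _ finite_lists_length_eq[of "{1..2 * n}" n]]) auto
  qed simp
  also have "\<dots> = (\<Sum>a\<in>A. fact n)"
    using complement by (simp add: A_def)
  finally show ?thesis by (simp add: A_def)
qed

lemma card_pdv_occ_eq_card_occ_odd_places: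
  assumes "\<pi> \<in> perms (2 * n)"
  shows "card (pdv_occ p \<pi>) = card (occ p (filter even (odd_places n \<pi>)))"
proof -
  have len: "length \<pi> = 2 * n" using assms by (rule length_perms)
  define odds where "odds = map (\<lambda>j. 2 * j + 1) [0..<n]"
  define ps where "ps = filter (\<lambda>i. even (\<pi> ! (i - 1))) odds"
  have sorted: "sorted_wrt (<) ps"
    unfolding ps_def odds_def by (intro sorted_wrt_filter) (simp add: sorted_wrt_map)
  have places: "set ps \<subseteq> {1..length \<pi>}"
    unfolding ps_def odds_def using len by auto
  have ps_iff: "i \<in> set ps \<longleftrightarrow> odd i \<and> even (\<pi> ! (i - 1))" if "i \<in> {1..2 * n}" for i
  proof -
    have "odd i \<longleftrightarrow> i \<in> set odds"
      using that unfolding odds_def by (auto elim!: oddE)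
    then show ?thesis unfolding ps_def by auto
  qed
  have "pdv_occ p \<pi> = {is \<in> occ p \<pi>. set is \<subseteq> set ps}"
    unfolding pdv_occ_def using ps_iff len by (auto simp: occ_def subset_iff)
  then have "card (pdv_occ p \<pi>) = card (occ p (map (\<lambda>i. \<pi> ! (i - 1)) ps))"
    using card_occ_within[OF sorted places] by simp
  also have "map (\<lambda>i. \<pi> ! (i - 1)) ps = filter even (odd_places n \<pi>)"
    unfolding ps_def odds_def odd_places_def by (simp add: filter_map comp_def)
  finally show ?thesis .
qed

section \<open>Counting odd-place words\<close>

lemma card_eq_sum_card_fibers:
  assumes "finite A" "finite B" "f ` A \<subseteq> B"
  shows "card A = (\<Sum>b\<in>B. card {a \<in> A. f a = b})"
  using sum.group[OF assms, of "\<lambda>_. 1 :: nat"] by simp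

lemma card_even_atLeastAtMost: "card {x \<in> {1..2 * n}. even x} = (n::nat)"
proof -
  have "{x \<in> {1..2 * n}. even x} = (\<lambda>j. 2 * j) ` {1..n}" by (auto elim!: evenE)
  then show ?thesis by (simp add: card_image inj_on_def)
qed

lemma card_odd_atLeastAtMost: "card {x \<in> {1..2 * n}. odd x} = (n::nat)"
proof -
  have "{x \<in> {1..2 * n}. odd x} = (\<lambda>j. 2 * j + 1) ` {..<n}" by (auto elim!: oddE)
  then show ?thesis by (simp add: card_image inj_on_def)
qed

lemma odd_place_words_with_even_subword:
  assumes "set w \<subseteq> {x \<in> {1..2 * n}. even x}"
  shows "{a \<in> odd_place_words n. filter even a = w} =
    interleavings even n w {x \<in> {1..2 * n}. odd x}"
proof -
  have "set a \<subseteq> {1..2 * n} \<longleftrightarrow> set a \<subseteq> set w \<union> {x \<in> {1..2 * n}. odd x}"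
    if w: "filter even a = w" for a
  proof
    assume "set a \<subseteq> {1..2 * n}"
    then show "set a \<subseteq> set w \<union> {x \<in> {1..2 * n}. odd x}" using w by force
  next
    assume "set a \<subseteq> set w \<union> {x \<in> {1..2 * n}. odd x}"
    with assms show "set a \<subseteq> {1..2 * n}" by blast
  qed
  then show ?thesis unfolding odd_place_words_def interleavings_def by blast
qed

lemma finite_odd_place_words: "finite (odd_place_words n)"
  unfolding odd_place_words_def
  by (rule finite_subset[OF _ finite_lists_length_eq[of "{1..2 * n}" n]]) auto

lemma card_odd_place_words_with_std:
  assumes \<sigma>: "\<sigma> \<in> perms k" and "k \<le> n"
  shows "card {a \<in> odd_place_words n. std (filter even a) = \<sigma>} =
    (n choose k) ^ 2 * falling_fact n (n - k)"
proof -
  define Ev where "Ev = {x \<in> {1..2 * n}. even x}"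
  define Od where "Od = {x \<in> {1..2 * n}. odd x}"
  define F where "F = {a \<in> odd_place_words n. std (filter even a) = \<sigma>}"
  define W where "W = {w. length w = k \<and> distinct w \<and> set w \<subseteq> Ev \<and> std w = \<sigma>}"
  have card_W: "card W = n choose k"
    unfolding W_def using card_words_with_std[OF _ \<sigma>] card_even_atLeastAtMost assms(2)
    by (simp add: Ev_def)
  have "filter even ` F \<subseteq> W"
  proof
    fix w assume "w \<in> filter even ` F"
    then obtain a where a: "a \<in> odd_place_words n" "std w = \<sigma>" "w = filter even a"
      by (auto simp: F_def)
    have "length w = k"
      using a(2) length_perms[OF \<sigma>] by (metis length_std)
    with a show "w \<in> W" by (auto simp: W_def Ev_def odd_place_words_def)
  qed
  moreover have "finite W"
    unfolding W_def Ev_def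
    by (rule finite_subset[OF _ finite_lists_length_eq[of "{1..2 * n}" k]]) auto
  ultimately have "card F = (\<Sum>w\<in>W. card {a \<in> F. filter even a = w})"
    by (intro card_eq_sum_card_fibers) (auto simp: F_def finite_odd_place_words)
  also have "\<dots> = (\<Sum>w\<in>W. (n choose k) * falling_fact n (n - k))"
  proof (rule sum.cong[OF refl])
    fix w assume w: "w \<in> W"
    then have "{a \<in> F. filter even a = w} = interleavings even n w Od"
      unfolding F_def Od_def using odd_place_words_with_even_subword[of w n]
      by (auto simp: W_def Ev_def)
    moreover have "card (interleavings even n w Od) = (n choose length w) * falling_fact (card Od) (n - length w)"
      using w by (intro card_interleavings) (auto simp: W_def Ev_def Od_def)
    ultimately show "card {a \<in> F. filter even a = w} = (n choose k) * falling_fact n (n - k)"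
      using w card_odd_atLeastAtMost by (simp add: W_def Od_def)
  qed
  finally show ?thesis using card_W by (simp add: F_def power2_eq_square)
qed

lemma card_odd_place_words_by_occ:
  "card {a \<in> odd_place_words n. card (occ p (filter even a)) = m} =
    (\<Sum>k = 0..n. A_count p k m * ((n choose k) ^ 2 * falling_fact n (n - k)))"
proof -
  define S where "S k = {\<sigma> \<in> perms k. card (occ p \<sigma>) = m}" for k
  define G where "G = {a \<in> odd_place_words n. card (occ p (filter even a)) = m}"
  define h where "h a = (length (filter even a), std (filter even a))" for a
  have occ_std: "occ p (filter even a) = occ p (std (filter even a))" if "a \<in> odd_place_words n" for a
    using that by (intro occ_cong_order_iso order_iso_std) (simp add: odd_place_words_def)
  have "h ` G \<subseteq> Sigma {0..n} S"
  proof (rule image_subsetI)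
    fix a assume "a \<in> G"
    moreover have "length (filter even a) \<le> length a" by (rule length_filter_le)
    ultimately show "h a \<in> Sigma {0..n} S"
      using occ_std std_in_perms by (auto simp: G_def S_def h_def odd_place_words_def)
  qed
  then have "card G = (\<Sum>y\<in>Sigma {0..n} S. card {a \<in> G. h a = y})"
    by (intro card_eq_sum_card_fibers) (auto simp: G_def S_def finite_odd_place_words finite_perms)
  also have "\<dots> = (\<Sum>k = 0..n. \<Sum>\<sigma>\<in>S k. card {a \<in> G. h a = (k, \<sigma>)})"
    by (subst sum.Sigma) (auto simp: S_def finite_perms)
  also have "\<dots> = (\<Sum>k = 0..n. \<Sum>\<sigma>\<in>S k. (n choose k) ^ 2 * falling_fact n (n - k))"
  proof (intro sum.cong refl)
    fix k \<sigma> assume k: "k \<in> {0..n}" and "\<sigma> \<in> S k"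
    then have \<sigma>: "\<sigma> \<in> perms k" "card (occ p \<sigma>) = m" by (auto simp: S_def)
    have h_iff: "h a = (k, \<sigma>) \<longleftrightarrow> std (filter even a) = \<sigma>" for a
      unfolding h_def using length_perms[OF \<sigma>(1)] by (metis length_std prod.inject)
    have "{a \<in> G. h a = (k, \<sigma>)} = {a \<in> odd_place_words n. std (filter even a) = \<sigma>}"
      using occ_std \<sigma>(2) by (auto simp: G_def h_iff)
    then show "card {a \<in> G. h a = (k, \<sigma>)} = (n choose k) ^ 2 * falling_fact n (n - k)"
      using card_odd_place_words_with_std[OF \<sigma>(1)] k by simp
  qed
  finally show ?thesis by (simp add: G_def S_def A_count_def)
qed

theorem mainTheorem1:
  fixes p :: "nat list" and t n m :: nat
  assumes "t \<ge> 1" and "p \<in> perms t" and "n \<ge> 1"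
  shows "B_count p (2 * n) m =
    (\<Sum>k = 0..n. fact n * fact (n - k) * (n choose k) ^ 3 * A_count p k m)"
proof -
  have "B_count p (2 * n) m =
      card {\<pi> \<in> perms (2 * n). card (occ p (filter even (odd_places n \<pi>))) = m}"
    unfolding B_count_def using card_pdv_occ_eq_card_occ_odd_places
    by (metis (no_types, lifting))
  also have "\<dots> = fact n * card {a \<in> odd_place_words n. card (occ p (filter even a)) = m}"
    by (rule card_perms_by_odd_places)
  also have "\<dots> = fact n * (\<Sum>k = 0..n. A_count p k m * ((n choose k) ^ 2 * falling_fact n (n - k)))"
    by (simp only: card_odd_place_words_by_occ)
  also have "\<dots> = (\<Sum>k = 0..n. fact n * fact (n - k) * (n choose k) ^ 3 * A_count p k m)"
    unfolding sum_distrib_left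
    by (intro sum.cong refl) (simp add: falling_fact_eq_binomial power2_eq_square power3_eq_cube)
  finally show ?thesis .
qed

end
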